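(* Let $n,g,k$ be integers with $g\geq 1$ and $1\leq k\leq n-2g-2$. Then the minimum number of edges of a connected graph $G$ of order $n$ having an $R_g$-cutset with $\kappa_g(G)=k$ equals $n-1$; that is, $s(n,k)=n-1$.
   Context: All graphs are finite and simple. A set $S\subseteq V(G)$ is a cutset if $G-S$ is disconnected. For a non-negative integer $g$, a cutset $S$ is an $R_g$-cutset if every connected component of $G-S$ has at least $g+1$ vertices. If $G$ has at least one $R_g$-cutset, the $g$-extra connectivity $\kappa_g(G)$ is the minimum cardinality of an $R_g$-cutset of $G$. For fixed $g$, $s(n,k)=\min\{|E(G)|: G \text{ connected of order } n,\ \kappa_g(G)=k\}$. *)

theory Defs
  imports Main
begin

definition sgraph :: "'a set \<Rightarrow> 'a set set \<Rightarrow> bool" where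
  "sgraph V E \<longleftrightarrow> finite V \<and> (\<forall>e\<in>E. \<exists>u v. e = {u, v} \<and> u \<in> V \<and> v \<in> V \<and> u \<noteq> v)"

definition reach_in :: "'a set set \<Rightarrow> 'a set \<Rightarrow> ('a \<times> 'a) set" where
  "reach_in E W = ({(x, y). {x, y} \<in> E \<and> x \<in> W \<and> y \<in> W})\<^sup>*"

definition connected_graph :: "'a set \<Rightarrow> 'a set set \<Rightarrow> bool" where
  "connected_graph V E \<longleftrightarrow> V \<noteq> {} \<and> (\<forall>u\<in>V. \<forall>v\<in>V. (u, v) \<in> reach_in E V)"

definition component_in :: "'a set set \<Rightarrow> 'a set \<Rightarrow> 'a \<Rightarrow> 'a set" where
  "component_in E W u = {v \<in> W. (u, v) \<in> reach_in E W}"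

definition cutset :: "'a set \<Rightarrow> 'a set set \<Rightarrow> 'a set \<Rightarrow> bool" where
  "cutset V E S \<longleftrightarrow> S \<subseteq> V \<and> (\<exists>u\<in>V - S. \<exists>v\<in>V - S. (u, v) \<notin> reach_in E (V - S))"

definition Rg_cutset :: "nat \<Rightarrow> 'a set \<Rightarrow> 'a set set \<Rightarrow> 'a set \<Rightarrow> bool" where
  "Rg_cutset g V E S \<longleftrightarrow> cutset V E S \<and> (\<forall>u\<in>V - S. card (component_in E (V - S) u) \<ge> g + 1)"

text \<open>g-extra connectivity (meaningful when an R_g-cutset exists).\<close>
definition kappa :: "nat \<Rightarrow> 'a set \<Rightarrow> 'a set set \<Rightarrow> nat" where
  "kappa g V E = (LEAST m. \<exists>S. Rg_cutset g V E S \<and> card S = m)"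

text \<open>s(n,k) for fixed g; graphs on vertex type nat (any finite graph is isomorphic to one).\<close>
definition s_min :: "nat \<Rightarrow> nat \<Rightarrow> nat \<Rightarrow> nat" where
  "s_min g n k = Inf {card E | (V :: nat set) E. sgraph V E \<and> card V = n \<and> connected_graph V E
                      \<and> (\<exists>S. Rg_cutset g V E S) \<and> kappa g V E = k}"

end

theory Submission
  imports Defs
begin

text \<open>A connected graph of order n has at least n - 1 edges, which gives the lower bound.
  For the upper bound take the tree on 0, ..., n-1 in which 0 is adjacent to 1, ..., k+1,
  the vertex 1 carries g pendant vertices and 2 carries the remaining n - k - g - 2 \<ge> g ones.
  Deleting 0 and the leaves 3, ..., k+1 leaves the two stars at 1 and 2, each of order at
  least g + 1, so \<open>\<kappa>\<^sub>g \<le> k\<close>. Conversely, as g \<ge> 1 every vertex outside an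
  \<open>R\<^sub>g\<close>-cutset has a neighbour outside it; hence the cutset contains the leaves 3, ..., k+1
  together with their neighbour 0, since otherwise 0 would join everything that is left.\<close>

lemma reach_in_sym:
  assumes "(x, y) \<in> reach_in E W"
  shows "(y, x) \<in> reach_in E W"
proof -
  have "sym {(x, y). {x, y} \<in> E \<and> x \<in> W \<and> y \<in> W}"
    by (rule symI) (auto simp: insert_commute)
  with assms show ?thesis
    unfolding reach_in_def by (blast intro: symD sym_rtrancl)
qed

lemma reach_in_edge: "{x, y} \<in> E \<Longrightarrow> x \<in> W \<Longrightarrow> y \<in> W \<Longrightarrow> (x, y) \<in> reach_in E W"
  unfolding reach_in_def by (intro r_into_rtrancl) auto

lemma reach_in_trans:
  "(x, y) \<in> reach_in E W \<Longrightarrow> (y, z) \<in> reach_in E W \<Longrightarrow> (x, z) \<in> reach_in E W"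
  unfolding reach_in_def by (rule rtrancl_trans)

lemma reach_in_closed:
  assumes "(u, v) \<in> reach_in E W" "u \<in> A"
    and "\<And>x y. x \<in> A \<Longrightarrow> {x, y} \<in> E \<Longrightarrow> y \<in> W \<Longrightarrow> y \<in> A"
  shows "v \<in> A"
  using assms(1) unfolding reach_in_def
  by (induction rule: rtrancl_induct) (use assms(2,3) in auto)

lemma component_in_star:
  assumes "A \<subseteq> W" "a \<in> A" "\<And>x. x \<in> A \<Longrightarrow> x \<noteq> a \<Longrightarrow> {x, a} \<in> E"
    and "\<And>x y. x \<in> A \<Longrightarrow> {x, y} \<in> E \<Longrightarrow> y \<in> W \<Longrightarrow> y \<in> A"
    and "u \<in> A"
  shows "component_in E W u = A"
proof -
  have to_centre: "(x, a) \<in> reach_in E W" if "x \<in> A" for x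
    using assms(1-3) that by (cases "x = a") (auto simp: reach_in_def intro: reach_in_edge)
  show ?thesis
    unfolding component_in_def
    using assms(1,4,5) reach_in_closed[of u _ E W A]
      reach_in_trans[OF to_centre[OF \<open>u \<in> A\<close>] reach_in_sym[OF to_centre]]
    by blast
qed

lemma Rg_cutset_neighbour:
  assumes "Rg_cutset g V E S" "g \<ge> 1" "x \<in> V - S"
  shows "\<exists>y \<in> V - S. {x, y} \<in> E"
proof -
  let ?C = "component_in E (V - S) x"
  have "card ?C \<ge> 2" using assms unfolding Rg_cutset_def by force
  then have "\<not> ?C \<subseteq> {x}" using card_mono[of "{x}" ?C] by auto
  then obtain y where "(x, y) \<in> reach_in E (V - S)" "y \<noteq> x"
    unfolding component_in_def by auto
  then show ?thesis unfolding reach_in_def by (auto elim: converse_rtranclE)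
qed

lemma connected_graph_parent_map:
  assumes "connected_graph V E" "r \<in> V"
  obtains p :: "'a \<Rightarrow> 'a" and d :: "'a \<Rightarrow> nat"
  where "\<And>v. v \<in> V - {r} \<Longrightarrow> {v, p v} \<in> E \<and> d (p v) < d v"
proof -
  define R where "R = {(x, y). {x, y} \<in> E \<and> x \<in> V \<and> y \<in> V}"
  define d where "d v = (LEAST m. (v, r) \<in> R ^^ m)" for v
  have d: "(v, r) \<in> R ^^ d v" if "v \<in> V" for v
  proof -
    have "(v, r) \<in> R\<^sup>*"
      using assms that unfolding connected_graph_def reach_in_def R_def by blast
    then show ?thesis unfolding d_def rtrancl_power by (rule LeastI_ex)
  qed
  have "\<forall>v \<in> V - {r}. \<exists>u. {v, u} \<in> E \<and> d u < d v"
  proof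
    fix v assume v: "v \<in> V - {r}"
    show "\<exists>u. {v, u} \<in> E \<and> d u < d v"
    proof (cases "d v")
      case 0
      then show ?thesis using d[of v] v by auto
    next
      case (Suc m)
      then obtain u where "(v, u) \<in> R" "(u, r) \<in> R ^^ m"
        using d v by (metis DiffD1 relpow_Suc_D2)
      moreover from this(2) have "d u \<le> m" unfolding d_def by (rule Least_le)
      ultimately show ?thesis using Suc unfolding R_def by auto
    qed
  qed
  then show thesis using that by (auto dest!: bchoice)
qed

lemma connected_graph_card_edges:
  assumes "sgraph V E" "connected_graph V E"
  shows "card V - 1 \<le> card E"
proof -
  obtain r where r: "r \<in> V" using assms(2) unfolding connected_graph_def by auto
  obtain p :: "'a \<Rightarrow> 'a" and d :: "'a \<Rightarrow> nat"
    where p: "\<And>v. v \<in> V - {r} \<Longrightarrow> {v, p v} \<in> E \<and> d (p v) < d v"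
    using connected_graph_parent_map[OF assms(2) r] by blast
  have "inj_on (\<lambda>v. {v, p v}) (V - {r})"
  proof (rule inj_onI)
    fix v w assume v: "v \<in> V - {r}" and w: "w \<in> V - {r}" and "{v, p v} = {w, p w}"
    then have "v = w \<or> (v = p w \<and> w = p v)" by (auto simp: doubleton_eq_iff)
    then show "v = w" using p[OF v] p[OF w] by auto
  qed
  moreover have "(\<lambda>v. {v, p v}) ` (V - {r}) \<subseteq> E" using p by auto
  moreover have "finite E"
  proof (rule finite_subset)
    show "E \<subseteq> Pow V" "finite (Pow V)" using assms(1) unfolding sgraph_def by auto
  qed
  ultimately have "card (V - {r}) \<le> card E"
    by (rule card_inj_on_le)
  then show ?thesis using r by simp
qed

definition parent_edges :: "nat \<Rightarrow> (nat \<Rightarrow> nat) \<Rightarrow> nat set set" where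
  "parent_edges n p = (\<lambda>i. {i, p i}) ` {1..<n}"

lemma parent_edges_iff:
  "{x, y} \<in> parent_edges n p \<longleftrightarrow> (1 \<le> x \<and> x < n \<and> y = p x) \<or> (1 \<le> y \<and> y < n \<and> x = p y)"
  unfolding parent_edges_def by (auto simp: doubleton_eq_iff)

context
  fixes p :: "nat \<Rightarrow> nat"
  assumes parent_less: "\<And>i. 0 < i \<Longrightarrow> p i < i"
begin

lemma sgraph_parent_edges: "sgraph {0..<n} (parent_edges n p)"
proof -
  have "i \<in> {0..<n} \<and> p i \<in> {0..<n} \<and> i \<noteq> p i" if "i \<in> {1..<n}" for i
    using parent_less[of i] that by auto
  then show ?thesis unfolding sgraph_def parent_edges_def by blast
qed

lemma reach_in_parent_edges_root: "i < n \<Longrightarrow> (i, 0) \<in> reach_in (parent_edges n p) {0..<n}"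
proof (induction i rule: less_induct)
  case (less i)
  show ?case
  proof (cases "i = 0")
    case True
    then show ?thesis by (simp add: reach_in_def)
  next
    case False
    then have "p i < i" "{i, p i} \<in> parent_edges n p"
      using parent_less less.prems by (auto simp: parent_edges_iff)
    then show ?thesis
      using reach_in_trans[OF reach_in_edge less.IH] less.prems by simp
  qed
qed

lemma connected_graph_parent_edges: "0 < n \<Longrightarrow> connected_graph {0..<n} (parent_edges n p)"
  unfolding connected_graph_def
  using reach_in_trans[OF reach_in_parent_edges_root reach_in_sym[OF reach_in_parent_edges_root]]
  by auto

lemma card_parent_edges: "card (parent_edges n p) = n - 1"
proof -
  have "inj_on (\<lambda>i. {i, p i}) {1..<n}"
  proof (rule inj_onI)
    fix i j assume "i \<in> {1..<n}" "j \<in> {1..<n}" "{i, p i} = {j, p j}"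
    then show "i = j"
      using parent_less[of i] parent_less[of j] by (auto simp: doubleton_eq_iff)
  qed
  then show ?thesis unfolding parent_edges_def by (simp add: card_image)
qed

end

definition extremal_tree_parent :: "nat \<Rightarrow> nat \<Rightarrow> nat \<Rightarrow> nat" where
  "extremal_tree_parent k g i = (if i \<le> k + 1 then 0 else if i < k + 2 + g then 1 else 2)"

abbreviation extremal_tree :: "nat \<Rightarrow> nat \<Rightarrow> nat \<Rightarrow> nat set set" where
  "extremal_tree n k g \<equiv> parent_edges n (extremal_tree_parent k g)"

abbreviation extremal_cut :: "nat \<Rightarrow> nat set" where
  "extremal_cut k \<equiv> insert 0 {3..k + 1}"

lemma extremal_tree_parent_less: "1 \<le> k \<Longrightarrow> 0 < i \<Longrightarrow> extremal_tree_parent k g i < i"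
  unfolding extremal_tree_parent_def by auto

lemma extremal_tree_neighbour:
  "3 \<le> x \<Longrightarrow> {x, y} \<in> extremal_tree n k g \<Longrightarrow> y = extremal_tree_parent k g x"
  unfolding parent_edges_iff extremal_tree_parent_def by (auto split: if_split_asm)

context
  fixes n k g :: nat
  assumes g: "g \<ge> 1" and k: "k \<ge> 1" and n: "k + 2 * g + 2 \<le> n"
begin

lemma component_in_extremal_tree_left:
  assumes "u \<in> insert 1 {k + 2..<k + 2 + g}"
  shows "component_in (extremal_tree n k g) ({0..<n} - extremal_cut k) u = insert 1 {k + 2..<k + 2 + g}"
proof (rule component_in_star[where a = "1 :: nat", OF _ _ _ _ assms])
  show "insert 1 {k + 2..<k + 2 + g} \<subseteq> {0..<n} - extremal_cut k" using k n by auto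
  show "{x, 1} \<in> extremal_tree n k g" if "x \<in> insert 1 {k + 2..<k + 2 + g}" "x \<noteq> 1" for x
    using that n by (auto simp: parent_edges_iff extremal_tree_parent_def)
  show "y \<in> insert 1 {k + 2..<k + 2 + g}"
    if "x \<in> insert 1 {k + 2..<k + 2 + g}" "{x, y} \<in> extremal_tree n k g" "y \<in> {0..<n} - extremal_cut k"
    for x y
    using that k by (auto simp: parent_edges_iff extremal_tree_parent_def split: if_split_asm)
qed simp

lemma component_in_extremal_tree_right:
  assumes "u \<in> insert 2 {k + 2 + g..<n}"
  shows "component_in (extremal_tree n k g) ({0..<n} - extremal_cut k) u = insert 2 {k + 2 + g..<n}"
proof (rule component_in_star[where a = "2 :: nat", OF _ _ _ _ assms])
  show "insert 2 {k + 2 + g..<n} \<subseteq> {0..<n} - extremal_cut k" using k n by auto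
  show "{x, 2} \<in> extremal_tree n k g" if "x \<in> insert 2 {k + 2 + g..<n}" "x \<noteq> 2" for x
    using that k by (auto simp: parent_edges_iff extremal_tree_parent_def)
  show "y \<in> insert 2 {k + 2 + g..<n}"
    if "x \<in> insert 2 {k + 2 + g..<n}" "{x, y} \<in> extremal_tree n k g" "y \<in> {0..<n} - extremal_cut k"
    for x y
    using that k by (auto simp: parent_edges_iff extremal_tree_parent_def split: if_split_asm)
qed simp

lemma extremal_cut_Rg_cutset: "Rg_cutset g {0..<n} (extremal_tree n k g) (extremal_cut k)"
proof -
  let ?W = "{0..<n} - extremal_cut k" and ?E = "extremal_tree n k g"
  have "1 \<in> ?W" "2 \<in> ?W" using k n by auto
  moreover have "2 \<notin> component_in ?E ?W 1" using component_in_extremal_tree_left[of 1] k by simp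
  then have "(1, 2) \<notin> reach_in ?E ?W" using \<open>2 \<in> ?W\<close> unfolding component_in_def by blast
  moreover have "extremal_cut k \<subseteq> {0..<n}" using n by auto
  ultimately have "cutset {0..<n} ?E (extremal_cut k)" unfolding cutset_def by blast
  moreover have "card (component_in ?E ?W u) \<ge> g + 1" if "u \<in> ?W" for u
  proof -
    from that consider "u \<in> insert 1 {k + 2..<k + 2 + g}" | "u \<in> insert 2 {k + 2 + g..<n}"
      by fastforce
    then show ?thesis
    proof cases
      case 1
      then show ?thesis using component_in_extremal_tree_left k by simp
    next
      case 2
      then show ?thesis using component_in_extremal_tree_right k n by simp
    qed
  qed
  ultimately show ?thesis unfolding Rg_cutset_def by blast
qed

lemma root_mem_Rg_cutset_extremal_tree:
  assumes S: "Rg_cutset g {0..<n} (extremal_tree n k g) S"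
  shows "0 \<in> S"
proof (rule ccontr)
  assume "0 \<notin> S"
  let ?W = "{0..<n} - S" and ?E = "extremal_tree n k g"
  have to_root: "(w, 0) \<in> reach_in ?E ?W" if w: "w \<in> ?W" for w
  proof -
    consider "w = 0" | "1 \<le> w" "w \<le> k + 1" | "k + 1 < w" by linarith
    then show ?thesis
    proof cases
      case 1
      then show ?thesis by (simp add: reach_in_def)
    next
      case 2
      then show ?thesis
        using w \<open>0 \<notin> S\<close> by (intro reach_in_edge) (auto simp: parent_edges_iff extremal_tree_parent_def)
    next
      case 3
      \<comment> \<open>w needs a neighbour outside S, and its only neighbour is its parent 1 or 2\<close>
      obtain y where y: "y \<in> ?W" "{w, y} \<in> ?E" using Rg_cutset_neighbour[OF S g w] by blast
      then have "y = extremal_tree_parent k g w" using extremal_tree_neighbour 3 k by simp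
      then have "y = 1 \<or> y = 2" using 3 by (simp add: extremal_tree_parent_def)
      then have "{y, 0} \<in> ?E" using n k by (auto simp: parent_edges_iff extremal_tree_parent_def)
      then show ?thesis
        using reach_in_trans[OF reach_in_edge[OF y(2)] reach_in_edge] y(1) w \<open>0 \<notin> S\<close> by auto
    qed
  qed
  from S obtain u v where "u \<in> ?W" "v \<in> ?W" "(u, v) \<notin> reach_in ?E ?W"
    unfolding Rg_cutset_def cutset_def by blast
  then show False using reach_in_trans[OF to_root reach_in_sym[OF to_root]] by blast
qed

lemma extremal_cut_subset_Rg_cutset:
  assumes S: "Rg_cutset g {0..<n} (extremal_tree n k g) S"
  shows "extremal_cut k \<subseteq> S"
proof -
  have "i \<in> S" if i: "i \<in> {3..k + 1}" for i
  proof (rule ccontr)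
    assume "i \<notin> S"
    then have "i \<in> {0..<n} - S" using i n by auto
    then obtain y where "y \<in> {0..<n} - S" "{i, y} \<in> extremal_tree n k g"
      using Rg_cutset_neighbour[OF S g] by blast
    then show False
      using extremal_tree_neighbour[of i y n k g] root_mem_Rg_cutset_extremal_tree[OF S] i
      by (auto simp: extremal_tree_parent_def)
  qed
  then show ?thesis using root_mem_Rg_cutset_extremal_tree[OF S] by auto
qed

lemma kappa_extremal_tree: "kappa g {0..<n} (extremal_tree n k g) = k"
  unfolding kappa_def
proof (rule Least_equality)
  show "\<exists>S. Rg_cutset g {0..<n} (extremal_tree n k g) S \<and> card S = k"
    using extremal_cut_Rg_cutset k by auto
next
  fix m assume "\<exists>S. Rg_cutset g {0..<n} (extremal_tree n k g) S \<and> card S = m"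
  then obtain S where S: "Rg_cutset g {0..<n} (extremal_tree n k g) S" "card S = m" by blast
  then have "S \<subseteq> {0..<n}" unfolding Rg_cutset_def cutset_def by blast
  then have "card (extremal_cut k) \<le> card S"
    using extremal_cut_subset_Rg_cutset[OF S(1)] by (meson card_mono finite_atLeastLessThan finite_subset)
  then show "k \<le> m" using S(2) k by simp
qed

lemma extremal_tree_witness:
  "sgraph {0..<n} (extremal_tree n k g) \<and> card {0..<n} = n
    \<and> connected_graph {0..<n} (extremal_tree n k g)
    \<and> (\<exists>S. Rg_cutset g {0..<n} (extremal_tree n k g) S)
    \<and> kappa g {0..<n} (extremal_tree n k g) = k \<and> card (extremal_tree n k g) = n - 1"
proof -
  have parent_less: "\<And>i. 0 < i \<Longrightarrow> extremal_tree_parent k g i < i"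
    using extremal_tree_parent_less k by blast
  show ?thesis
    using sgraph_parent_edges[OF parent_less] connected_graph_parent_edges[OF parent_less]
      card_parent_edges[OF parent_less] extremal_cut_Rg_cutset kappa_extremal_tree n
    by auto
qed

end

theorem proposition5p1:
  fixes n g k :: nat
  assumes "g \<ge> 1" and "1 \<le> k" and "k + 2 * g + 2 \<le> n"
  shows "s_min g n k = n - 1"
proof -
  let ?X = "{card E | (V :: nat set) E. sgraph V E \<and> card V = n \<and> connected_graph V E
                      \<and> (\<exists>S. Rg_cutset g V E S) \<and> kappa g V E = k}"
  have "n - 1 \<in> ?X"
    using extremal_tree_witness[OF assms]
    by (intro CollectI exI[of _ "{0..<n}"] exI[of _ "extremal_tree n k g"]) auto
  moreover have "n - 1 \<le> x" if "x \<in> ?X" for x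
    using that connected_graph_card_edges by auto
  ultimately show ?thesis unfolding s_min_def by (rule cInf_eq_minimum)
qed

end
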